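(* Let $\nu<0$ and define $\mathcal{R}_\nu:\mathbb{R}\to\mathbb{R}$ by $$\mathcal{R}_\nu(x):=\frac{(H_{\nu-1}(x))^2}{H_{\nu}(x)\,H_{\nu-2}(x)},\qquad x\in\mathbb{R},$$ where $H_\alpha$ denotes the Hermite function of index $\alpha$. Then $$1<\mathcal{R}_\nu(x)<\frac{\nu-1}{\nu}\qquad\text{for all }x\in\mathbb{R}.$$ In particular, the Turán-type inequality $$H_{\nu-1}(x)^2-H_{\nu}(x)H_{\nu-2}(x)>0$$ holds for all $x\in\mathbb{R}$.
   Context: For $\alpha<0$, the Hermite function $H_\alpha:\mathbb{R}\to\mathbb{R}$ is the solution of the ODE $u''(x)-2xu'(x)+2\alpha u(x)=0$ given by the integral representation $$H_\alpha(x)=\frac{1}{\Gamma(-\alpha)}\int_0^\infty t^{-\alpha-1}e^{-t^2-2xt}\,dt,\qquad x\in\mathbb{R},$$ where $\Gamma$ is Euler's Gamma function. In particular $H_\alpha(x)>0$ for all $x$ when $\alpha<0$. *)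

theory Defs
  imports "HOL-Analysis.Analysis"
begin

text \<open>Hermite function of negative index alpha, via its integral representation
  H_alpha(x) = 1/Gamma(-alpha) * integral over (0,infinity) of t^(-alpha-1) exp(-t^2-2xt) dt.
  (The definition is only intended for alpha < 0.)\<close>
definition hermite_fun :: "real \<Rightarrow> real \<Rightarrow> real" where
  "hermite_fun \<alpha> x =
     (1 / Gamma (- \<alpha>)) *
     (LBINT t:{0<..}. t powr (- \<alpha> - 1) * exp (- (t\<^sup>2) - 2 * x * t))"

definition turan_ratio :: "real \<Rightarrow> real \<Rightarrow> real" where
  "turan_ratio \<nu> x =
     (hermite_fun (\<nu> - 1) x)\<^sup>2 / (hermite_fun \<nu> x * hermite_fun (\<nu> - 2) x)"

end

theory Submission imports Defs "HOL-Real_Asymp.Real_Asymp" begin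

text \<open>For \<open>a > 0\<close>, \<open>\<Gamma>(a) H\<^sub>-\<^sub>a(x)\<close> is the moment \<open>J(a - 1)\<close>, where
  \<open>J(p) = \<integral>\<^sub>0\<^sup>\<infinity> t\<^sup>p exp (-t\<^sup>2 - 2xt) dt\<close>; the Gamma factors turn the Turan ratio for \<open>\<nu> = -a\<close> into
  \<open>((a + 1) / a) J(a)\<^sup>2 / (J(a - 1) J(a + 1))\<close>.  Positivity of \<open>\<integral> t\<^sup>p (l - t)\<^sup>2 exp (-t\<^sup>2 - 2xt) dt\<close>
  (Cauchy-Schwarz) makes \<open>J\<close> strictly log-convex, which is the upper bound.  Integration by
  parts gives \<open>p J(p - 1) = 2 J(p + 1) + 2x J(p)\<close>; eliminating \<open>x\<close> between the instances
  \<open>p = a\<close> and \<open>p = a + 1\<close> turns the lower bound into log-convexity \<open>J(a + 1)\<^sup>2 < J(a) J(a + 2)\<close>.\<close>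

definition gauss_moment :: "real \<Rightarrow> real \<Rightarrow> real" where
  "gauss_moment x p = (LBINT t:{0<..}. t powr p * exp (- (t\<^sup>2) - 2 * x * t))"

lemma set_integral_pos_if_pos_on_interval:
  fixes h :: "real \<Rightarrow> real"
  assumes int: "set_integrable lborel A h" and nonneg: "\<And>t. t \<in> A \<Longrightarrow> h t \<ge> 0"
    and "c < d" and sub: "{c<..<d} \<subseteq> A" and pos: "\<And>t. c < t \<Longrightarrow> t < d \<Longrightarrow> h t > 0"
  shows "(LBINT t:A. h t) > 0"
proof -
  let ?g = "\<lambda>t. indicator A t *\<^sub>R h t"
  have g_int: "integrable lborel ?g" using int by (simp add: set_integrable_def)
  have g_nonneg: "AE t in lborel. 0 \<le> ?g t" by (intro AE_I2) (auto simp: indicator_def nonneg)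
  have "integral\<^sup>L lborel ?g \<noteq> 0"
  proof
    assume "integral\<^sup>L lborel ?g = 0"
    then have "AE t in lborel. ?g t = 0"
      using integral_nonneg_eq_0_iff_AE[OF g_int g_nonneg] by simp
    then have "AE t in lborel. t \<notin> {c<..<d}"
      by (rule AE_mp, intro AE_I2 impI) (use sub pos in \<open>force simp: indicator_def\<close>)
    then have "emeasure lborel {c<..<d} = 0"
      by (subst (asm) AE_iff_measurable[of "{c<..<d}"]) auto
    then show False using \<open>c < d\<close> by simp
  qed
  with integral_nonneg_AE[OF g_nonneg] show ?thesis by (simp add: set_lebesgue_integral_def)
qed

lemma exp_neg_square_le:
  fixes x t :: real
  shows "exp (- (t\<^sup>2) - 2 * x * t) \<le> exp ((1 - 2 * x)\<^sup>2 / 4) / exp t"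
proof -
  have "- (t\<^sup>2) - 2 * x * t = (1 - 2 * x)\<^sup>2 / 4 - t - (t + (2 * x - 1) / 2)\<^sup>2"
    by (simp add: power2_eq_square algebra_simps)
  then have "- (t\<^sup>2) - 2 * x * t \<le> (1 - 2 * x)\<^sup>2 / 4 - t" by simp
  then show ?thesis by (metis exp_diff exp_le_cancel_iff)
qed

lemma gauss_moment_integrable:
  fixes x p :: real
  assumes "p > -1"
  shows "set_integrable lborel {0<..} (\<lambda>t. t powr p * exp (- (t\<^sup>2) - 2 * x * t))"
proof -
  define C where "C = exp ((1 - 2 * x)\<^sup>2 / 4)"
  have "((\<lambda>t. t powr (p + 1 - 1) / exp t) has_integral Gamma (p + 1)) {0..}"
    by (rule Gamma_integral_real) (use assms in auto)
  then have "(\<lambda>t. t powr p / exp t) absolutely_integrable_on {0..}"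
    by (subst absolutely_integrable_on_iff_nonneg) (auto simp: has_integral_integrable_integral)
  from integrable_mult_right[OF this[unfolded set_integrable_def], of C]
  have bound_int: "integrable lborel (\<lambda>t. indicat_real {0..} t *\<^sub>R (C * (t powr p / exp t)))"
    by (subst (asm) integrable_completion) (auto simp: mult_ac)
  show ?thesis
    unfolding set_integrable_def
  proof (rule Bochner_Integration.integrable_bound[OF bound_int _ AE_I2])
    fix t :: real
    have "t powr p * exp (- t\<^sup>2 - 2 * x * t) \<le> C * (t powr p / exp t)"
      using mult_left_mono[OF exp_neg_square_le[of t x], of "t powr p"] by (simp add: C_def mult_ac)
    then show "norm (indicat_real {0<..} t *\<^sub>R (t powr p * exp (- t\<^sup>2 - 2 * x * t)))
        \<le> norm (indicat_real {0..} t *\<^sub>R (C * (t powr p / exp t)))"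
      by (cases "t > 0") (simp_all add: indicator_def C_def)
  qed measurable
qed

lemma gauss_moment_pos:
  assumes "p > -1"
  shows "gauss_moment x p > 0"
  unfolding gauss_moment_def
  by (rule set_integral_pos_if_pos_on_interval[OF gauss_moment_integrable[OF assms],
      where c = 1 and d = 2]) auto

lemma gauss_moment_recurrence:
  assumes "p > 0"
  shows "p * gauss_moment x (p - 1) = 2 * gauss_moment x (p + 1) + 2 * x * gauss_moment x p"
proof -
  define w where "w = (\<lambda>t::real. exp (- (t\<^sup>2) - 2 * x * t))"
  define f where "f = (\<lambda>t. p * (t powr (p - 1) * w t) - 2 * (t powr (p + 1) * w t)
                          - 2 * x * (t powr p * w t))"
  have int: "set_integrable lborel {0<..} (\<lambda>t. t powr q * w t)" if "q > -1" for q
    unfolding w_def using that by (rule gauss_moment_integrable)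
  note ints = int[of "p - 1"] int[of "p + 1"] int[of p]
  have "(LBINT t=ereal 0..\<infinity>. f t) = 0 - 0"
  proof (rule interval_integral_FTC_integrable[where F = "\<lambda>t. t powr p * w t"])
    fix t assume "ereal 0 < ereal t" "ereal t < \<infinity>"
    then have t: "t > 0" by simp
    have "((\<lambda>t. t powr p * w t) has_real_derivative
        p * t powr (p - 1) * w t + t powr p * (w t * (- (2 * t) - 2 * x))) (at t)"
      unfolding w_def using t by (auto intro!: derivative_eq_intros)
    moreover have "p * t powr (p - 1) * w t + t powr p * (w t * (- (2 * t) - 2 * x)) = f t"
      using t by (simp add: f_def powr_add algebra_simps)
    ultimately show "((\<lambda>t. t powr p * w t) has_vector_derivative f t) (at t)"
      by (simp add: has_real_derivative_iff_has_vector_derivative)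
    show "isCont f t" unfolding f_def w_def using t by (intro continuous_intros) auto
  next
    show "set_integrable lborel (einterval (ereal 0) \<infinity>) f"
      unfolding f_def using ints assms
      by (simp add: set_integral_diff(1) set_integrable_mult_right)
  next
    have "((\<lambda>t. t powr p * exp (- (t\<^sup>2) - 2 * x * t)) \<longlongrightarrow> 0) (at_right 0)"
      using assms by real_asymp
    then show "(((\<lambda>t. t powr p * w t) \<circ> real_of_ereal) \<longlongrightarrow> 0) (at_right (ereal 0))"
      unfolding ereal_tendsto_simps w_def .
  next
    have "((\<lambda>t. t powr p * exp (- (t\<^sup>2) - 2 * x * t)) \<longlongrightarrow> 0) at_top"
      by real_asymp
    then show "(((\<lambda>t. t powr p * w t) \<circ> real_of_ereal) \<longlongrightarrow> 0) (at_left \<infinity>)"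
      unfolding ereal_tendsto_simps w_def .
  qed simp
  then have "(LBINT t:{0<..}. f t) = 0"
    by (simp add: interval_lebesgue_integral_def)
  then show ?thesis
    unfolding f_def gauss_moment_def w_def using ints[unfolded w_def] assms
    by (simp add: set_integral_diff set_integrable_mult_right)
qed

lemma gauss_moment_quadratic_pos:
  assumes "p > -1"
  shows "l\<^sup>2 * gauss_moment x p - 2 * l * gauss_moment x (p + 1) + gauss_moment x (p + 2) > 0"
proof -
  define w where "w = (\<lambda>t::real. exp (- (t\<^sup>2) - 2 * x * t))"
  define g where "g = (\<lambda>t. l\<^sup>2 * (t powr p * w t) - 2 * l * (t powr (p + 1) * w t)
                          + t powr (p + 2) * w t)"
  have int: "set_integrable lborel {0<..} (\<lambda>t. t powr q * w t)" if "q > -1" for q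
    unfolding w_def using that by (rule gauss_moment_integrable)
  note ints = int[of p] int[of "p + 1"] int[of "p + 2"]
  have g_int: "set_integrable lborel {0<..} g"
    unfolding g_def using ints assms
    by (simp add: set_integral_add(1) set_integral_diff(1) set_integrable_mult_right)
  have g_eq: "g t = t powr p * (l - t)\<^sup>2 * w t" if "t > 0" for t
    using that unfolding g_def by (simp add: powr_add power2_eq_square algebra_simps)
  have "(LBINT t:{0<..}. g t) > 0"
  proof (rule set_integral_pos_if_pos_on_interval[OF g_int, of "\<bar>l\<bar> + 1" "\<bar>l\<bar> + 2"])
    fix t :: real assume "\<bar>l\<bar> + 1 < t" "t < \<bar>l\<bar> + 2"
    then show "0 < g t" by (simp add: g_eq w_def)
  qed (auto simp: g_eq w_def)
  then show ?thesis
    unfolding g_def gauss_moment_def w_def using ints[unfolded w_def] assms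
    by (simp add: set_integral_diff set_integral_add set_integrable_mult_right)
qed

lemma gauss_moment_sq_less:
  assumes "p > -1"
  shows "(gauss_moment x (p + 1))\<^sup>2 < gauss_moment x p * gauss_moment x (p + 2)"
proof -
  let ?J = "gauss_moment x"
  have "?J p > 0" using assms by (rule gauss_moment_pos)
  moreover have "(?J (p + 1) / ?J p)\<^sup>2 * ?J p - 2 * (?J (p + 1) / ?J p) * ?J (p + 1)
      + ?J (p + 2) > 0"
    using assms by (rule gauss_moment_quadratic_pos)
  ultimately show ?thesis by (simp add: power2_eq_square field_simps)
qed

lemma gauss_moment_turan_lower:
  assumes "a > 0"
  shows "a * gauss_moment x (a - 1) * gauss_moment x (a + 1) < (a + 1) * (gauss_moment x a)\<^sup>2"
proof -
  define j0 j1 j2 j3 where "j0 = gauss_moment x (a - 1)" and "j1 = gauss_moment x a"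
    and "j2 = gauss_moment x (a + 1)" and "j3 = gauss_moment x (a + 2)"
  note j_defs = j0_def j1_def j2_def j3_def
  have rec0: "a * j0 = 2 * j2 + 2 * x * j1"
    unfolding j_defs using gauss_moment_recurrence[OF assms] .
  have rec1: "(a + 1) * j1 = 2 * j3 + 2 * x * j2"
    unfolding j_defs using gauss_moment_recurrence[of "a + 1" x] assms by (simp add: add.commute)
  have "(a + 1) * j1\<^sup>2 - a * j0 * j2 = j1 * ((a + 1) * j1) - j2 * (a * j0)"
    by (simp add: power2_eq_square algebra_simps)
  also have "\<dots> = 2 * (j1 * j3 - j2\<^sup>2)"
    unfolding rec0 rec1 by (simp add: power2_eq_square algebra_simps)
  finally have "(a + 1) * j1\<^sup>2 - a * j0 * j2 = 2 * (j1 * j3 - j2\<^sup>2)" .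
  moreover have "j2\<^sup>2 < j1 * j3"
    unfolding j_defs using gauss_moment_sq_less[of a x] assms by simp
  ultimately have "0 < (a + 1) * j1\<^sup>2 - a * j0 * j2" by simp
  then show ?thesis unfolding j_defs by simp
qed

lemma hermite_fun_neg_shifts:
  assumes "a > 0"
  shows "hermite_fun (- a) x = gauss_moment x (a - 1) / Gamma a"
    and "hermite_fun (- a - 1) x = gauss_moment x a / (a * Gamma a)"
    and "hermite_fun (- a - 2) x = gauss_moment x (a + 1) / ((a + 1) * a * Gamma a)"
proof -
  have Gamma_Suc: "Gamma (b + 1) = b * Gamma b" if "b > 0" for b :: real
    using that by (subst Gamma_plus1) (auto simp: nonpos_Ints_def)
  show "hermite_fun (- a) x = gauss_moment x (a - 1) / Gamma a"
    by (simp add: hermite_fun_def gauss_moment_def)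
  show "hermite_fun (- a - 1) x = gauss_moment x a / (a * Gamma a)"
    using Gamma_Suc[OF assms] by (simp add: hermite_fun_def gauss_moment_def add.commute)
  have "Gamma (a + 2) = (a + 1) * a * Gamma a"
    using Gamma_Suc[of "a + 1"] Gamma_Suc[OF assms] assms by (simp add: add.assoc)
  then show "hermite_fun (- a - 2) x = gauss_moment x (a + 1) / ((a + 1) * a * Gamma a)"
    by (simp add: hermite_fun_def gauss_moment_def algebra_simps)
qed

lemma hermite_fun_pos:
  assumes "\<alpha> < 0"
  shows "hermite_fun \<alpha> x > 0"
  using gauss_moment_pos[of "- \<alpha> - 1" x] Gamma_real_pos[of "- \<alpha>"] assms
  by (simp add: hermite_fun_def gauss_moment_def)

lemma turan_ratio_neg_eq:
  assumes "a > 0"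
  shows "turan_ratio (- a) x
    = (a + 1) * (gauss_moment x a)\<^sup>2 / (a * gauss_moment x (a - 1) * gauss_moment x (a + 1))"
proof -
  have "Gamma a \<noteq> 0" using Gamma_real_pos[OF assms] by linarith
  moreover have "gauss_moment x (a - 1) \<noteq> 0" "gauss_moment x (a + 1) \<noteq> 0"
    using gauss_moment_pos[of "a - 1" x] gauss_moment_pos[of "a + 1" x] assms by auto
  ultimately show ?thesis using assms
    unfolding turan_ratio_def hermite_fun_neg_shifts[OF assms]
    by (simp add: power2_eq_square divide_simps)
qed

lemma turan_ratio_neg_bounds:
  assumes "a > 0"
  shows "1 < turan_ratio (- a) x" and "turan_ratio (- a) x < (a + 1) / a"
proof -
  let ?J = "gauss_moment x"
  have pos: "a * ?J (a - 1) * ?J (a + 1) > 0"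
    using assms gauss_moment_pos[of "a - 1" x] gauss_moment_pos[of "a + 1" x] by simp
  show "1 < turan_ratio (- a) x"
    unfolding turan_ratio_neg_eq[OF assms] using gauss_moment_turan_lower[OF assms] pos by simp
  have "(?J a)\<^sup>2 < ?J (a - 1) * ?J (a + 1)"
    using gauss_moment_sq_less[of "a - 1" x] assms by (simp add: add.commute)
  then have "a * (a + 1) * (?J a)\<^sup>2 < a * (a + 1) * (?J (a - 1) * ?J (a + 1))"
    by (rule mult_strict_left_mono) (use assms in simp)
  then show "turan_ratio (- a) x < (a + 1) / a"
    unfolding turan_ratio_neg_eq[OF assms] using pos assms by (simp add: field_simps)
qed

theorem corollary3p2:
  fixes \<nu> :: real
  assumes "\<nu> < 0"
  shows "(\<forall>x::real. 1 < turan_ratio \<nu> x \<and> turan_ratio \<nu> x < (\<nu> - 1) / \<nu>) \<and>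
         (\<forall>x::real. (hermite_fun (\<nu> - 1) x)\<^sup>2 - hermite_fun \<nu> x * hermite_fun (\<nu> - 2) x > 0)"
proof -
  have "(- \<nu> + 1) / - \<nu> = (\<nu> - 1) / \<nu>"
    using assms by (simp add: field_simps)
  then have ratio_bounds: "1 < turan_ratio \<nu> x" "turan_ratio \<nu> x < (\<nu> - 1) / \<nu>" for x
    using turan_ratio_neg_bounds[of "- \<nu>" x] assms by simp_all
  have "hermite_fun \<nu> x * hermite_fun (\<nu> - 2) x > 0" for x
    using hermite_fun_pos[of \<nu> x] hermite_fun_pos[of "\<nu> - 2" x] assms by simp
  with ratio_bounds(1) have "(hermite_fun (\<nu> - 1) x)\<^sup>2 > hermite_fun \<nu> x * hermite_fun (\<nu> - 2) x"
    for x by (simp add: turan_ratio_def)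
  with ratio_bounds show ?thesis by simp
qed

end
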